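(* Let $x_0\in X$ be a regular point. For every $p$-harmonic function $u\ge0$ on $\mathcal T(x_0)$ there exists a unique additive function $\nu$ on $\mathcal T(x_0)$ such that $$u(x)=\frac{1}{W^{(n(x))}(x)}\,\nu(x),\qquad x\in\mathcal T(x_0).$$ Conversely, if $\nu$ is an additive function on $\mathcal T(x_0)$ and $u$ is defined by this formula, then $u$ is $p$-harmonic.
   Context: $X$ is a compact metric space, $r:X\to X$ a finite-to-one, onto, Borel map, $m_0$ a Borel function with $\frac{1}{\#r^{-1}(x)}\sum_{r(y)=x}|m_0(y)|^2=1$, and $W(x)=|m_0(x)|^2/\#r^{-1}(r(x))$. A point $x_0$ is regular if the sets $r^{-n}(x_0)$, $n\in\mathbb N$, are mutually disjoint and no $r^{-n}(x_0)$, $n\ge0$, meets the zero set of $W$. $\mathcal T(x_0)=\bigcup_{n\ge0}r^{-n}(x_0)$; $n(x)$ is the unique $n\ge0$ with $r^n(x)=x_0$. $W^{(n)}(x)=W(x)W(r(x))\cdots W(r^{n-1}(x))$ (equal to $1$ for $n=0$). A function $u$ on $\mathcal T(x_0)$ is $p$-harmonic if $u(x)=\sum_{r(y)=x}W(y)u(y)$ for all $x\in\mathcal T(x_0)$. A non-negative function $\nu$ on $\mathcal T(x_0)$ is additive if $\nu(x)=\sum_{r(y)=x}\nu(y)$ for all $x\in\mathcal T(x_0)$. *)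

theory Defs
  imports "HOL-Analysis.Analysis"
begin

definition preim :: "'a set \<Rightarrow> ('a \<Rightarrow> 'a) \<Rightarrow> 'a \<Rightarrow> 'a set" where
  "preim X r x = {y \<in> X. r y = x}"

definition standing :: "('a::metric_space) set \<Rightarrow> ('a \<Rightarrow> 'a) \<Rightarrow> ('a \<Rightarrow> complex) \<Rightarrow> bool" where
  "standing X r m0 \<longleftrightarrow>
     compact X \<and> r ` X = X \<and> (\<forall>x\<in>X. finite (preim X r x)) \<and>
     r \<in> measurable (restrict_space borel X) (restrict_space borel X) \<and>
     m0 \<in> borel_measurable (restrict_space borel X) \<and>
     (\<forall>x\<in>X. (1 / real (card (preim X r x))) * (\<Sum>y\<in>preim X r x. (cmod (m0 y))\<^sup>2) = 1)"

definition Wfun :: "'a set \<Rightarrow> ('a \<Rightarrow> 'a) \<Rightarrow> ('a \<Rightarrow> complex) \<Rightarrow> 'a \<Rightarrow> real" where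
  "Wfun X r m0 x = (cmod (m0 x))\<^sup>2 / real (card (preim X r (r x)))"

definition Wn :: "'a set \<Rightarrow> ('a \<Rightarrow> 'a) \<Rightarrow> ('a \<Rightarrow> complex) \<Rightarrow> nat \<Rightarrow> 'a \<Rightarrow> real" where
  "Wn X r m0 n x = (\<Prod>k<n. Wfun X r m0 ((r ^^ k) x))"

definition preimn :: "'a set \<Rightarrow> ('a \<Rightarrow> 'a) \<Rightarrow> nat \<Rightarrow> 'a \<Rightarrow> 'a set" where
  "preimn X r n x0 = {y \<in> X. (r ^^ n) y = x0}"

definition regular :: "'a set \<Rightarrow> ('a \<Rightarrow> 'a) \<Rightarrow> ('a \<Rightarrow> complex) \<Rightarrow> 'a \<Rightarrow> bool" where
  "regular X r m0 x0 \<longleftrightarrow> x0 \<in> X \<and>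
     (\<forall>n m. n \<noteq> m \<longrightarrow> preimn X r n x0 \<inter> preimn X r m x0 = {}) \<and>
     (\<forall>n. \<forall>y\<in>preimn X r n x0. Wfun X r m0 y \<noteq> 0)"

definition tree :: "'a set \<Rightarrow> ('a \<Rightarrow> 'a) \<Rightarrow> 'a \<Rightarrow> 'a set" where
  "tree X r x0 = (\<Union>n. preimn X r n x0)"

definition level :: "('a \<Rightarrow> 'a) \<Rightarrow> 'a \<Rightarrow> 'a \<Rightarrow> nat" where
  "level r x0 x = (THE n. (r ^^ n) x = x0)"

definition p_harmonic :: "'a set \<Rightarrow> ('a \<Rightarrow> 'a) \<Rightarrow> ('a \<Rightarrow> complex) \<Rightarrow> 'a \<Rightarrow> ('a \<Rightarrow> real) \<Rightarrow> bool" where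
  "p_harmonic X r m0 x0 u \<longleftrightarrow>
     (\<forall>x\<in>tree X r x0. u x = (\<Sum>y\<in>preim X r x. Wfun X r m0 y * u y))"

definition additive_fun :: "'a set \<Rightarrow> ('a \<Rightarrow> 'a) \<Rightarrow> 'a \<Rightarrow> ('a \<Rightarrow> real) \<Rightarrow> bool" where
  "additive_fun X r x0 \<nu> \<longleftrightarrow>
     (\<forall>x\<in>tree X r x0. \<nu> x \<ge> 0) \<and>
     (\<forall>x\<in>tree X r x0. \<nu> x = (\<Sum>y\<in>preim X r x. \<nu> y))"

end

theory Submission
  imports Defs
begin

text \<open>Since \<open>W^(n(y))(y) = W(y) W^(n(x))(x)\<close> for every child \<open>y\<close> of \<open>x\<close> in the tree,
  the substitution \<open>\<nu>(x) = W^(n(x))(x) u(x)\<close> turns the harmonicity equation for \<open>u\<close>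
  into the additivity equation for \<open>\<nu>\<close> and back. Regularity makes every \<open>W^(n(x))(x)\<close>
  positive, so the substitution is invertible, which gives uniqueness.\<close>

lemma funpow_mem:
  assumes "r ` X \<subseteq> X" "x \<in> X"
  shows "(r ^^ k) x \<in> X"
  using assms by (induction k) auto

lemma level_eq:
  assumes "regular X r m0 x0" "x \<in> X" "(r ^^ n) x = x0"
  shows "level r x0 x = n"
  unfolding level_def
proof (rule the_equality)
  fix m assume m: "(r ^^ m) x = x0"
  show "m = n"
  proof (rule ccontr)
    assume "m \<noteq> n"
    then have "preimn X r m x0 \<inter> preimn X r n x0 = {}"
      using assms(1) by (simp add: regular_def)
    moreover have "x \<in> preimn X r m x0 \<inter> preimn X r n x0"
      using assms(2,3) m by (simp add: preimn_def)
    ultimately show False by blast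
  qed
qed (rule assms(3))

lemma mem_tree_iff:
  assumes "regular X r m0 x0"
  shows "x \<in> tree X r x0 \<longleftrightarrow> x \<in> X \<and> (r ^^ level r x0 x) x = x0"
proof
  assume "x \<in> tree X r x0"
  then obtain n where "x \<in> X" "(r ^^ n) x = x0" by (auto simp: tree_def preimn_def)
  then show "x \<in> X \<and> (r ^^ level r x0 x) x = x0" using level_eq[OF assms] by auto
qed (auto simp: tree_def preimn_def)

lemma preim_mem_tree_level_Suc:
  assumes "regular X r m0 x0" "x \<in> tree X r x0" "y \<in> preim X r x"
  shows "y \<in> tree X r x0 \<and> level r x0 y = Suc (level r x0 x)"
proof -
  have y: "y \<in> X" "r y = x" using assms(3) by (auto simp: preim_def)
  have "(r ^^ Suc (level r x0 x)) y = x0"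
    using mem_tree_iff[OF assms(1)] assms(2) y by (simp only: funpow_Suc_right o_apply)
  then show ?thesis
    using level_eq[OF assms(1) y(1)] y(1) unfolding tree_def preimn_def by blast
qed

lemma Wn_Suc: "Wn X r m0 (Suc n) y = Wfun X r m0 y * Wn X r m0 n (r y)"
  unfolding Wn_def by (simp only: prod.lessThan_Suc_shift funpow_Suc_right o_apply funpow_0)

lemma Wn_level_preim:
  assumes "regular X r m0 x0" "x \<in> tree X r x0" "y \<in> preim X r x"
  shows "Wn X r m0 (level r x0 y) y = Wfun X r m0 y * Wn X r m0 (level r x0 x) x"
  using preim_mem_tree_level_Suc[OF assms] assms(3) by (simp add: Wn_Suc preim_def)

lemma Wn_level_pos:
  assumes "r ` X \<subseteq> X" "regular X r m0 x0" "x \<in> tree X r x0"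
  shows "Wn X r m0 (level r x0 x) x > 0"
  unfolding Wn_def
proof (rule prod_pos)
  let ?n = "level r x0 x"
  fix k assume "k \<in> {..<?n}"
  then have k: "k \<le> ?n" by simp
  have x: "x \<in> X" "(r ^^ ?n) x = x0" using mem_tree_iff[OF assms(2)] assms(3) by auto
  then have "(r ^^ (?n - k)) ((r ^^ k) x) = x0"
    using k by (metis funpow_add le_add_diff_inverse2 o_apply)
  then have "(r ^^ k) x \<in> preimn X r (?n - k) x0"
    using funpow_mem[OF assms(1) x(1)] by (simp add: preimn_def)
  then have "Wfun X r m0 ((r ^^ k) x) \<noteq> 0" using assms(2) unfolding regular_def by blast
  then show "Wfun X r m0 ((r ^^ k) x) > 0" by (simp add: Wfun_def)
qed

lemma additive_fun_from_p_harmonic: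
  assumes "r ` X \<subseteq> X" "regular X r m0 x0"
    and harm: "p_harmonic X r m0 x0 u" and nonneg: "\<forall>x\<in>tree X r x0. u x \<ge> 0"
  shows "additive_fun X r x0 (restrict (\<lambda>x. u x * Wn X r m0 (level r x0 x) x) (tree X r x0))"
    (is "additive_fun X r x0 ?\<nu>")
  unfolding additive_fun_def
proof (intro conjI ballI)
  fix x assume x: "x \<in> tree X r x0"
  show "?\<nu> x \<ge> 0" using nonneg Wn_level_pos[OF assms(1,2) x] x by simp
  have "?\<nu> x = (\<Sum>y\<in>preim X r x. Wfun X r m0 y * u y) * Wn X r m0 (level r x0 x) x"
    using harm x by (simp add: p_harmonic_def)
  also have "\<dots> = (\<Sum>y\<in>preim X r x. ?\<nu> y)"
    unfolding sum_distrib_right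
    using preim_mem_tree_level_Suc[OF assms(2) x] Wn_level_preim[OF assms(2) x]
    by (intro sum.cong) (simp_all add: mult_ac)
  finally show "?\<nu> x = (\<Sum>y\<in>preim X r x. ?\<nu> y)" .
qed

lemma p_harmonic_from_additive_fun:
  assumes "r ` X \<subseteq> X" "regular X r m0 x0" and add: "additive_fun X r x0 \<nu>"
    and u: "\<forall>x\<in>tree X r x0. u x = \<nu> x / Wn X r m0 (level r x0 x) x"
  shows "p_harmonic X r m0 x0 u"
  unfolding p_harmonic_def
proof
  fix x assume x: "x \<in> tree X r x0"
  have "(\<Sum>y\<in>preim X r x. Wfun X r m0 y * u y)
      = (\<Sum>y\<in>preim X r x. \<nu> y / Wn X r m0 (level r x0 x) x)"
  proof (rule sum.cong)
    fix y assume y: "y \<in> preim X r x"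
    have y_tree: "y \<in> tree X r x0" using preim_mem_tree_level_Suc[OF assms(2) x y] by blast
    then have "Wfun X r m0 y \<noteq> 0"
      using Wn_level_pos[OF assms(1,2)] Wn_level_preim[OF assms(2) x y] by fastforce
    then show "Wfun X r m0 y * u y = \<nu> y / Wn X r m0 (level r x0 x) x"
      using u y_tree Wn_level_preim[OF assms(2) x y] by simp
  qed simp
  also have "\<dots> = \<nu> x / Wn X r m0 (level r x0 x) x"
    using add x by (simp add: additive_fun_def sum_divide_distrib)
  finally show "u x = (\<Sum>y\<in>preim X r x. Wfun X r m0 y * u y)" using u x by simp
qed

lemma extensional_eq_level_weighted:
  assumes "r ` X \<subseteq> X" "regular X r m0 x0" "\<nu> \<in> extensional (tree X r x0)"
    and "\<forall>x\<in>tree X r x0. u x = \<nu> x / Wn X r m0 (level r x0 x) x"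
  shows "\<nu> = restrict (\<lambda>x. u x * Wn X r m0 (level r x0 x) x) (tree X r x0)"
proof
  fix x show "\<nu> x = restrict (\<lambda>x. u x * Wn X r m0 (level r x0 x) x) (tree X r x0) x"
    using assms Wn_level_pos[OF assms(1,2), of x]
    by (cases "x \<in> tree X r x0") (auto simp: extensional_def)
qed

theorem corollary4p7:
  fixes X :: "'a::metric_space set" and r :: "'a \<Rightarrow> 'a" and m0 :: "'a \<Rightarrow> complex" and x0 :: 'a
  assumes "standing X r m0"
    and "regular X r m0 x0"
  shows "(\<forall>u. p_harmonic X r m0 x0 u \<and> (\<forall>x\<in>tree X r x0. u x \<ge> 0) \<longrightarrow>
            (\<exists>!\<nu>. \<nu> \<in> extensional (tree X r x0) \<and> additive_fun X r x0 \<nu> \<and>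
               (\<forall>x\<in>tree X r x0. u x = \<nu> x / Wn X r m0 (level r x0 x) x)))
       \<and> (\<forall>\<nu> u. additive_fun X r x0 \<nu> \<and>
            (\<forall>x\<in>tree X r x0. u x = \<nu> x / Wn X r m0 (level r x0 x) x) \<longrightarrow>
            p_harmonic X r m0 x0 u)"
proof -
  have rX: "r ` X \<subseteq> X" using assms(1) by (simp add: standing_def)
  show ?thesis
  proof (intro conjI allI impI)
    fix u assume u: "p_harmonic X r m0 x0 u \<and> (\<forall>x\<in>tree X r x0. u x \<ge> 0)"
    let ?\<nu> = "restrict (\<lambda>x. u x * Wn X r m0 (level r x0 x) x) (tree X r x0)"
    have "\<forall>x\<in>tree X r x0. u x = ?\<nu> x / Wn X r m0 (level r x0 x) x"
      using Wn_level_pos[OF rX assms(2)] by (simp add: less_imp_neq[symmetric])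
    then show "\<exists>!\<nu>. \<nu> \<in> extensional (tree X r x0) \<and> additive_fun X r x0 \<nu> \<and>
                 (\<forall>x\<in>tree X r x0. u x = \<nu> x / Wn X r m0 (level r x0 x) x)"
      using additive_fun_from_p_harmonic[OF rX assms(2)] u
        extensional_eq_level_weighted[OF rX assms(2)]
      by (intro ex1I[of _ ?\<nu>]) auto
  next
    fix \<nu> u assume "additive_fun X r x0 \<nu> \<and>
              (\<forall>x\<in>tree X r x0. u x = \<nu> x / Wn X r m0 (level r x0 x) x)"
    then show "p_harmonic X r m0 x0 u"
      using p_harmonic_from_additive_fun[OF rX assms(2)] by blast
  qed
qed

end
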